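(* Let $\beta>0$, $\tilde\lambda\in(0,1]$, $\mathcal{L}\ge 0$, $x\ge 0$, $y\le 0$, $z\ge 0$, $r>0$. For $\Delta>y$ let $p^D(\Delta)=\frac{x}{\Delta-y}$. Suppose the set $F$ of $\Delta>y$ with $\beta(\mathcal{L}+\Delta)\le\tilde\lambda\big(z+\Delta p^D(\Delta)\big)$ is nonempty, and write $F=[\Delta_{\min},\Delta_{\max}]\cap(y,\infty)$, where $\Delta_{\min}\le\Delta_{\max}$ are the real roots of $-\beta \Delta^2 + \Delta( \tilde \lambda (z+x) - \beta(\mathcal{L} - y)) - \tilde\lambda zy + \beta\mathcal{L} y$. Consider the problem $$\max_{\Delta\in F}\; r\Big(z+\Delta\frac{x}{\Delta-y}\Big)-\mathcal{L}-\Delta ,$$ equivalently maximizing $f(\Delta)=r\Delta\frac{x}{\Delta-y}-\Delta$ over $F$. Let $\Delta^*=y+\sqrt{-yrx}$. Then the solution of this problem is $\Delta^*$ if $\Delta^*\in F$; it is $\Delta_{\min}$ if $\Delta^*<\Delta_{\min}$; and it is $\Delta_{\max}$ if $\Delta^*>\Delta_{\max}$.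
   Context: Single period $t$ of a stablecoin market model. A speculator owes $\mathcal{L}=\mathcal{L}_{t-1}$ stablecoins and holds Ether worth $z$ dollars; $x\ge0$ is new dollar stablecoin demand and $y\le0$ (with $|y|$ the free stablecoin supply). The speculator chooses a change $\Delta$ in stablecoin supply; for $\Delta>y$ the market clears at price $p^D(\Delta)=x/(\Delta-y)$. The speculator maximizes expected equity $r(z+\Delta p^D(\Delta))-(\mathcal{L}+\Delta)$, where $r$ is its expected multiplicative Ether return, subject to the leverage constraint $\beta(\mathcal{L}+\Delta)\le\tilde\lambda(z+\Delta p^D(\Delta))$ with liquidation threshold $\beta$ and leverage bound $\tilde\lambda$. *)

theory Defs
  imports Complex_Main
begin

definition pD :: "real \<Rightarrow> real \<Rightarrow> real \<Rightarrow> real" where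
  "pD x y d = x / (d - y)"

definition feasible :: "real \<Rightarrow> real \<Rightarrow> real \<Rightarrow> real \<Rightarrow> real \<Rightarrow> real \<Rightarrow> real set" where
  "feasible \<beta> lam L x y z = {d. d > y \<and> \<beta> * (L + d) \<le> lam * (z + d * pD x y d)}"

definition objective :: "real \<Rightarrow> real \<Rightarrow> real \<Rightarrow> real \<Rightarrow> real \<Rightarrow> real \<Rightarrow> real" where
  "objective r L x y z d = r * (z + d * pD x y d) - L - d"

definition constr_quad :: "real \<Rightarrow> real \<Rightarrow> real \<Rightarrow> real \<Rightarrow> real \<Rightarrow> real \<Rightarrow> real \<Rightarrow> real" where
  "constr_quad \<beta> lam L x y z d =
     - \<beta> * d\<^sup>2 + d * (lam * (z + x) - \<beta> * (L - y)) - lam * z * y + \<beta> * L * y"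

end

theory Submission
  imports Defs
begin

text \<open>Shifting to t = d - y, the objective becomes a constant minus t + a/t with
  a = -y r x \<ge> 0, which strictly decreases on (0, sqrt a] and strictly increases
  on [sqrt a, \<infinity>). Hence the objective is strictly unimodal in d with peak
  d* = y + sqrt a. Multiplying the leverage constraint by d - y > 0 turns it into
  the sign condition on the concave quadratic constr_quad, so the feasible set is
  the interval [d_min, d_max] intersected with (y, \<infinity>), and the unique maximiser of a
  unimodal function on an interval is its peak or the endpoint nearest to it.\<close>

lemma quadratic_eq_factor_roots:
  fixes c B C a b d :: real
  assumes "c \<noteq> 0" and "a \<le> b"
    and roots: "\<forall>d. c * d\<^sup>2 + B * d + C = 0 \<longleftrightarrow> d = a \<or> d = b"
  shows "c * d\<^sup>2 + B * d + C = c * (d - a) * (d - b)"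
proof -
  define e where "e = - B / c - a"
  have "c * a\<^sup>2 + B * a + C = 0" using roots by blast
  then have factor: "\<And>d. c * d\<^sup>2 + B * d + C = c * (d - a) * (d - e)"
    using \<open>c \<noteq> 0\<close> unfolding e_def by (simp add: field_simps power2_eq_square) algebra
  then have "e = a \<or> e = b" using roots factor[of e] by auto
  moreover have "a = b" if "e = a"
    using factor[of b] roots that \<open>c \<noteq> 0\<close> by auto
  ultimately have "e = b" by auto
  then show ?thesis using factor by simp
qed

lemma feasible_iff_constr_quad_nonneg:
  assumes "d > y"
  shows "d \<in> feasible \<beta> lam L x y z \<longleftrightarrow> constr_quad \<beta> lam L x y z d \<ge> 0"
proof -
  have "lam * (z + d * pD x y d) = lam * (z * (d - y) + d * x) / (d - y)"
    using assms unfolding pD_def by (simp add: field_simps)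
  then have "\<beta> * (L + d) \<le> lam * (z + d * pD x y d) \<longleftrightarrow>
             \<beta> * (L + d) * (d - y) \<le> lam * (z * (d - y) + d * x)"
    using assms by (simp add: pos_le_divide_eq)
  also have "\<dots> \<longleftrightarrow> constr_quad \<beta> lam L x y z d \<ge> 0"
    unfolding constr_quad_def by (simp add: power2_eq_square algebra_simps)
  finally show ?thesis using assms unfolding feasible_def by simp
qed

lemma feasible_eq_interval:
  assumes "\<beta> > 0" and "dmin \<le> dmax"
    and "\<forall>d. constr_quad \<beta> lam L x y z d = 0 \<longleftrightarrow> d = dmin \<or> d = dmax"
  shows "feasible \<beta> lam L x y z = {d. y < d \<and> dmin \<le> d \<and> d \<le> dmax}"
proof -
  have "constr_quad \<beta> lam L x y z d = - \<beta> * (d - dmin) * (d - dmax)" for d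
    using quadratic_eq_factor_roots[of "- \<beta>" dmin dmax "lam * (z + x) - \<beta> * (L - y)"
        "- lam * z * y + \<beta> * L * y" d] assms
    unfolding constr_quad_def by (simp add: algebra_simps)
  then have "constr_quad \<beta> lam L x y z d \<ge> 0 \<longleftrightarrow> dmin \<le> d \<and> d \<le> dmax" for d
    using assms(1,2) by (auto simp: mult_le_0_iff zero_le_mult_iff)
  then show ?thesis
    using feasible_iff_constr_quad_nonneg unfolding feasible_def by auto
qed

lemma objective_shift:
  assumes "t > 0"
  shows "objective r L x y z (y + t) = r * (z + x) - L - y - (t + (- y * r * x) / t)"
  using assms unfolding objective_def pD_def by (simp add: field_simps)

lemma add_divide_diff:
  fixes s t a :: real
  assumes "s > 0" and "t > 0"
  shows "(t + a / t) - (s + a / s) = (t - s) * (s * t - a) / (s * t)"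
  using assms by (simp add: field_simps)

lemma add_divide_strict_antimono:
  fixes s t a :: real
  assumes "0 < s" and "s < t" and "t \<le> sqrt a"
  shows "t + a / t < s + a / s"
proof -
  have "sqrt a > 0" using assms by linarith
  then have "a > 0" by simp
  have "s * t < t * t" using assms by simp
  also have "\<dots> \<le> sqrt a * sqrt a" using assms \<open>a > 0\<close> by (intro mult_mono) auto
  finally have "s * t < a" using \<open>a > 0\<close> by simp
  then have "(t - s) * (s * t - a) / (s * t) < 0"
    using assms by (intro divide_neg_pos mult_pos_neg) auto
  then show ?thesis using add_divide_diff[of s t a] assms by simp
qed

lemma add_divide_strict_mono:
  fixes s t a :: real
  assumes "a \<ge> 0" and "0 < s" and "sqrt a \<le> s" and "s < t"
  shows "s + a / s < t + a / t"
proof -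
  have "sqrt a * sqrt a \<le> s * s" using assms by (intro mult_mono) auto
  also have "\<dots> < s * t" using assms by simp
  finally have "a < s * t" using assms by simp
  then have "(t - s) * (s * t - a) / (s * t) > 0"
    using assms by (intro divide_pos_pos mult_pos_pos) auto
  then show ?thesis using add_divide_diff[of s t a] assms by simp
qed

lemma objective_strict_mono_below_peak:
  assumes "y < d" and "d < e" and "e \<le> y + sqrt (- y * r * x)"
  shows "objective r L x y z d < objective r L x y z e"
  using add_divide_strict_antimono[of "d - y" "e - y" "- y * r * x"] assms
    objective_shift[of "d - y" r L x y z] objective_shift[of "e - y" r L x y z] by simp

lemma objective_strict_antimono_above_peak:
  assumes "- y * r * x \<ge> 0" and "y < d" and "y + sqrt (- y * r * x) \<le> d" and "d < e"
  shows "objective r L x y z e < objective r L x y z d"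
  using add_divide_strict_mono[of "- y * r * x" "d - y" "e - y"] assms
    objective_shift[of "d - y" r L x y z] objective_shift[of "e - y" r L x y z] by simp

lemma is_arg_max_set_eq_singleton:
  fixes f :: "'a \<Rightarrow> 'b::order"
  assumes "m \<in> S" and "\<And>d. d \<in> S \<Longrightarrow> d \<noteq> m \<Longrightarrow> f d < f m"
  shows "{d. is_arg_max f (\<lambda>d. d \<in> S) d} = {m}"
  using assms unfolding is_arg_max_def by (auto dest: less_asym)

theorem proposition3p2:
  fixes \<beta> lam L x y z r dmin dmax :: real
  assumes "\<beta> > 0" and "0 < lam" and "lam \<le> 1" and "L \<ge> 0" and "x \<ge> 0"
    and "y \<le> 0" and "z \<ge> 0" and "r > 0"
    and "feasible \<beta> lam L x y z \<noteq> {}"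
    and "dmin \<le> dmax"
    and "\<forall>d. constr_quad \<beta> lam L x y z d = 0 \<longleftrightarrow> (d = dmin \<or> d = dmax)"
  defines "dstar \<equiv> y + sqrt (- y * r * x)"
  defines "Sol \<equiv> {d. is_arg_max (objective r L x y z) (\<lambda>d. d \<in> feasible \<beta> lam L x y z) d}"
  shows "(dstar \<in> feasible \<beta> lam L x y z \<longrightarrow> Sol = {dstar})
       \<and> (dstar < dmin \<longrightarrow> Sol = {dmin})
       \<and> (dstar > dmax \<longrightarrow> Sol = {dmax})"
proof -
  have F: "feasible \<beta> lam L x y z = {d. y < d \<and> dmin \<le> d \<and> d \<le> dmax}"
    using feasible_eq_interval assms(1,10,11) by blast
  have a: "- y * r * x \<ge> 0" using assms(5,6,8) by (simp add: mult_nonpos_nonneg)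
  then have "y \<le> dstar" unfolding dstar_def by simp
  note inc = objective_strict_mono_below_peak[where y = y and r = r and x = x and L = L and z = z,
      folded dstar_def]
  note dec = objective_strict_antimono_above_peak[OF a, where L = L and z = z, folded dstar_def]
  have "Sol = {dstar}" if "dstar \<in> feasible \<beta> lam L x y z"
    unfolding Sol_def
    by (rule is_arg_max_set_eq_singleton[OF that])
      (use that F inc dec in \<open>auto simp: neq_iff\<close>)
  moreover have "Sol = {dmin}" if "dstar < dmin"
    unfolding Sol_def
    by (rule is_arg_max_set_eq_singleton)
      (use that F \<open>y \<le> dstar\<close> assms(10) dec in \<open>auto simp: neq_iff\<close>)
  moreover have "Sol = {dmax}" if "dstar > dmax"
    unfolding Sol_def
    by (rule is_arg_max_set_eq_singleton)
      (use that F assms(9) inc in \<open>auto simp: neq_iff\<close>)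
  ultimately show ?thesis by blast
qed

end
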